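(* For any type distribution $D$, any valuation functions $\{v_i\}_{i\in[n]}$ such that for every bidder $i$ and every type $t_i$ the set function $v_i(t_i,\cdot)$ is monotone and subadditive on $2^{[m]}$, and any Bayes–Nash equilibrium $s$ of the simultaneous all-pay auction (SAP), the tuple $(\mathrm{SAP},s,D,\{v_i\})$ is $\tfrac12$-efficient.
   Context: $n$ bidders, $m$ items; bidder $i$ has type $t_i\sim D_i$ (independent across bidders, $D=\times_iD_i$) and valuation $v_i(t_i,S)\ge0$. A simultaneous auction runs $m$ independent single-item auctions, one per item, on bid vectors $b_i\in(\mathbb R_{\ge0}\cup\{\perp\})^m$ ($\perp$ = abstain, pays nothing for that item); bidder $i$ receives the union of items won, pays the sum of per-item payments $p_i^{(j)}$, utility = value of bundle minus payment. SAP: in each item's auction the highest bidder wins and every bidder pays its bid for that item. Strategies map types to distributions of bid vectors; Bayes–Nash equilibrium (BNE) means no bidder of any type can improve its expected utility by deviating. $\mathrm{Rev}^{(s)}_D(\mathcal A,S)=\sum_i\sum_{j\in S}\mathbb E_{t\sim D,b\sim s(t)}[p_i^{(j)}(b^{(j)})]$. $\mu_i^{(s)}(t_i,S)=\sup_{q_i\in(\mathbb R_{\ge0}\cup\{\perp\})^m}\mathbb E_{t_{-i}\sim D_{-i},b_{-i}\sim s_{-i}(t_{-i})}\big[v_i(t_i,X_i(q_i,b_{-i})\cap S)-\sum_{j\in S}p_i^{(j)}(q_i^{(j)},b_{-i}^{(j)})\big]$, where $X_i$ is the set of items $i$ wins. $c$-efficiency of $(\mathcal A,s,D,\{v_i\})$: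 (1) per-item payments are nonnegative and bidding $\perp$ on an item costs nothing for it; (2) the highest bidder on each item wins it; (3) for all $i,t_i,S\subseteq[m]$: $\mu_i^{(s)}(t_i,S)+\mathrm{Rev}^{(s)}_D(\mathcal A,S)\ge c\,v_i(t_i,S)$. *)

theory Defs
  imports "HOL-Probability.Probability"
begin

text \<open>A bid on a single item is an element of the nonnegative reals or the abstention
  symbol; abstention is None, a bid x is Some x.  A bid vector is a function from items
  to single-item bids; only items 0..m-1 are relevant.\<close>

type_synonym bidvec = "nat \<Rightarrow> real option"

definition bid_item :: "real option measure" where
  "bid_item = vimage_algebra (insert None (Some ` {0..}))
      (\<lambda>ob. case ob of None \<Rightarrow> -1 | Some x \<Rightarrow> x) borel"

definition bid_space :: "nat \<Rightarrow> bidvec measure" where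
  "bid_space m = PiM {..<m} (\<lambda>_. bid_item)"

text \<open>A simultaneous auction format is given by per-item rules:
  alloc j bb = winner (if any) of item j given the bids bb (bidder => bid on item j),
  pay j bb k = payment of bidder k for item j.\<close>

definition highest :: "nat \<Rightarrow> (nat \<Rightarrow> real option) \<Rightarrow> nat set" where
  "highest n bb = {k. k < n \<and> (\<exists>x. bb k = Some x \<and>
                      (\<forall>k' y. k' < n \<longrightarrow> bb k' = Some y \<longrightarrow> y \<le> x))}"

definition sap_alloc :: "(nat \<Rightarrow> nat set \<Rightarrow> nat) \<Rightarrow> nat \<Rightarrow> nat \<Rightarrow> (nat \<Rightarrow> real option) \<Rightarrow> nat option" where
  "sap_alloc tb n j bb = (if highest n bb = {} then None else Some (tb j (highest n bb)))"

definition sap_pay :: "nat \<Rightarrow> (nat \<Rightarrow> real option) \<Rightarrow> nat \<Rightarrow> real" where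
  "sap_pay j bb k = (case bb k of None \<Rightarrow> 0 | Some x \<Rightarrow> x)"

definition joint :: "nat \<Rightarrow> 't measure \<Rightarrow> ('t \<Rightarrow> bidvec measure) \<Rightarrow> ('t \<times> bidvec) measure" where
  "joint m Di si = Giry_Monad.bind Di (\<lambda>t. Giry_Monad.bind (si t)
       (\<lambda>b. return (Di \<Otimes>\<^sub>M bid_space m) (t, b)))"

definition others :: "nat \<Rightarrow> nat \<Rightarrow> (nat \<Rightarrow> 't measure) \<Rightarrow> (nat \<Rightarrow> 't \<Rightarrow> bidvec measure)
                      \<Rightarrow> nat \<Rightarrow> (nat \<Rightarrow> 't \<times> bidvec) measure" where
  "others n m D s i = PiM ({..<n} - {i}) (\<lambda>k. joint m (D k) (s k))"

definition profile :: "nat \<Rightarrow> nat \<Rightarrow> (nat \<Rightarrow> 't measure) \<Rightarrow> (nat \<Rightarrow> 't \<Rightarrow> bidvec measure)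
                      \<Rightarrow> (nat \<Rightarrow> 't \<times> bidvec) measure" where
  "profile n m D s = PiM {..<n} (\<lambda>k. joint m (D k) (s k))"

definition item_bids :: "nat \<Rightarrow> nat \<Rightarrow> bidvec \<Rightarrow> (nat \<Rightarrow> 't \<times> bidvec) \<Rightarrow> nat \<Rightarrow> (nat \<Rightarrow> real option)" where
  "item_bids n i q w j = (\<lambda>k. if k = i then q j else if k < n then snd (w k) j else None)"

definition full_bids :: "nat \<Rightarrow> (nat \<Rightarrow> 't \<times> bidvec) \<Rightarrow> nat \<Rightarrow> (nat \<Rightarrow> real option)" where
  "full_bids n w j = (\<lambda>k. if k < n then snd (w k) j else None)"

definition won :: "(nat \<Rightarrow> (nat \<Rightarrow> real option) \<Rightarrow> nat option) \<Rightarrow> nat \<Rightarrow> nat \<Rightarrow> nat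
                   \<Rightarrow> bidvec \<Rightarrow> (nat \<Rightarrow> 't \<times> bidvec) \<Rightarrow> nat set" where
  "won alloc n m i q w = {j. j < m \<and> alloc j (item_bids n i q w j) = Some i}"

text \<open>The value part is a Bochner integral
  (the integrand lies in [0, v_i(t,S)] for monotone v), the payment part a nonnegative
  integral (payments are nonnegative), so the difference is well defined in ereal.\<close>

definition exp_util ::
  "(nat \<Rightarrow> (nat \<Rightarrow> real option) \<Rightarrow> nat option) \<Rightarrow> (nat \<Rightarrow> (nat \<Rightarrow> real option) \<Rightarrow> nat \<Rightarrow> real)
   \<Rightarrow> nat \<Rightarrow> nat \<Rightarrow> (nat \<Rightarrow> 't measure) \<Rightarrow> (nat \<Rightarrow> 't \<Rightarrow> bidvec measure)
   \<Rightarrow> (nat \<Rightarrow> 't \<Rightarrow> nat set \<Rightarrow> real) \<Rightarrow> nat \<Rightarrow> 't \<Rightarrow> bidvec measure \<Rightarrow> nat set \<Rightarrow> ereal" where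
  "exp_util alloc pay n m D s v i t \<sigma> S =
     ereal (\<integral>q. (\<integral>w. v i t (won alloc n m i q w \<inter> S) \<partial>others n m D s i) \<partial>\<sigma>)
     - enn2ereal (\<integral>\<^sup>+q. (\<integral>\<^sup>+w. ennreal (\<Sum>j\<in>S. pay j (item_bids n i q w j) i) \<partial>others n m D s i) \<partial>\<sigma>)"

definition mu ::
  "(nat \<Rightarrow> (nat \<Rightarrow> real option) \<Rightarrow> nat option) \<Rightarrow> (nat \<Rightarrow> (nat \<Rightarrow> real option) \<Rightarrow> nat \<Rightarrow> real)
   \<Rightarrow> nat \<Rightarrow> nat \<Rightarrow> (nat \<Rightarrow> 't measure) \<Rightarrow> (nat \<Rightarrow> 't \<Rightarrow> bidvec measure)
   \<Rightarrow> (nat \<Rightarrow> 't \<Rightarrow> nat set \<Rightarrow> real) \<Rightarrow> nat \<Rightarrow> 't \<Rightarrow> nat set \<Rightarrow> ereal" where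
  "mu alloc pay n m D s v i t S =
     (SUP q\<in>space (bid_space m). exp_util alloc pay n m D s v i t (return (bid_space m) q) S)"

definition revenue ::
  "(nat \<Rightarrow> (nat \<Rightarrow> real option) \<Rightarrow> nat \<Rightarrow> real)
   \<Rightarrow> nat \<Rightarrow> nat \<Rightarrow> (nat \<Rightarrow> 't measure) \<Rightarrow> (nat \<Rightarrow> 't \<Rightarrow> bidvec measure) \<Rightarrow> nat set \<Rightarrow> ennreal" where
  "revenue pay n m D s S =
     (\<Sum>i<n. \<Sum>j\<in>S. \<integral>\<^sup>+w. ennreal (pay j (full_bids n w j) i) \<partial>profile n m D s)"

definition valid_setting :: "nat \<Rightarrow> nat \<Rightarrow> (nat \<Rightarrow> 't measure) \<Rightarrow> (nat \<Rightarrow> 't \<Rightarrow> bidvec measure) \<Rightarrow> bool" where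
  "valid_setting n m D s \<longleftrightarrow>
     (\<forall>i<n. prob_space (D i) \<and> s i \<in> measurable (D i) (prob_algebra (bid_space m)))"

definition BNE ::
  "(nat \<Rightarrow> (nat \<Rightarrow> real option) \<Rightarrow> nat option) \<Rightarrow> (nat \<Rightarrow> (nat \<Rightarrow> real option) \<Rightarrow> nat \<Rightarrow> real)
   \<Rightarrow> nat \<Rightarrow> nat \<Rightarrow> (nat \<Rightarrow> 't measure) \<Rightarrow> (nat \<Rightarrow> 't \<Rightarrow> bidvec measure)
   \<Rightarrow> (nat \<Rightarrow> 't \<Rightarrow> nat set \<Rightarrow> real) \<Rightarrow> bool" where
  "BNE alloc pay n m D s v \<longleftrightarrow> valid_setting n m D s \<and>
     (\<forall>i<n. \<forall>t\<in>space (D i). \<forall>\<sigma>\<in>space (prob_algebra (bid_space m)).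
        exp_util alloc pay n m D s v i t \<sigma> {..<m} \<le> exp_util alloc pay n m D s v i t (s i t) {..<m})"

definition c_efficient ::
  "real \<Rightarrow> (nat \<Rightarrow> (nat \<Rightarrow> real option) \<Rightarrow> nat option) \<Rightarrow> (nat \<Rightarrow> (nat \<Rightarrow> real option) \<Rightarrow> nat \<Rightarrow> real)
   \<Rightarrow> nat \<Rightarrow> nat \<Rightarrow> (nat \<Rightarrow> 't measure) \<Rightarrow> (nat \<Rightarrow> 't \<Rightarrow> bidvec measure)
   \<Rightarrow> (nat \<Rightarrow> 't \<Rightarrow> nat set \<Rightarrow> real) \<Rightarrow> bool" where
  "c_efficient c alloc pay n m D s v \<longleftrightarrow>
     (\<forall>j<m. \<forall>bb k. (\<forall>k' x. bb k' = Some x \<longrightarrow> x \<ge> 0) \<longrightarrow> (pay j bb k \<ge> 0 \<and> (bb k = None \<longrightarrow> pay j bb k = 0))) \<and>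
     (\<forall>j<m. \<forall>bb. highest n bb \<noteq> {} \<longrightarrow> (\<exists>k\<in>highest n bb. alloc j bb = Some k)) \<and>
     (\<forall>i<n. \<forall>t\<in>space (D i). \<forall>S\<subseteq>{..<m}.
        mu alloc pay n m D s v i t S + enn2ereal (revenue pay n m D s S) \<ge> ereal (c * v i t S))"

end

theory Submission
  imports Defs
begin

text \<open>Fix bidder i of type t and a set S of items, and let i deviate as follows: draw an
  independent copy w' of the rivals' types and bids, and bid on every item the rivals' total
  bid in w' plus e.  Against the actual rivals w, bidder i then wins every item on which the
  rivals' total in w is at most that in w'.  Since w and w' are exchangeable and v(t, -) is
  subadditive, the expected value of these items in S is at least v(t, S)/2, while the
  expected payment on S is at most the revenue on S plus |S| e.  Some deterministic bid
  does at least as well as this randomised one, which bounds mu from below; then let e go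
  to 0.\<close>

definition bid_amount :: "real option \<Rightarrow> real" where
  "bid_amount b = (case b of None \<Rightarrow> 0 | Some x \<Rightarrow> x)"

text \<open>The real encoding of single-item bids that generates the measurable space bid_item;
  abstention ranks below every bid.\<close>

definition bid_rank :: "real option \<Rightarrow> real" where
  "bid_rank b = (case b of None \<Rightarrow> -1 | Some x \<Rightarrow> x)"

lemma space_bid_item: "space bid_item = insert None (Some ` {0..})"
  unfolding bid_item_def by simp

lemma space_bid_space: "space (bid_space m) = (\<Pi>\<^sub>E j\<in>{..<m}. space bid_item)"
  by (simp add: bid_space_def space_PiM)

lemma measurable_bid_rank [measurable]: "bid_rank \<in> borel_measurable bid_item"
  unfolding bid_item_def bid_rank_def[abs_def] by (rule measurable_vimage_algebra1) auto

lemma bid_amount_eq_max_bid_rank: "b \<in> space bid_item \<Longrightarrow> bid_amount b = max 0 (bid_rank b)"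
  by (auto simp: space_bid_item bid_rank_def bid_amount_def)

lemma measurable_bid_amount [measurable]: "bid_amount \<in> borel_measurable bid_item"
  by (rule measurable_cong[OF bid_amount_eq_max_bid_rank, THEN iffD2]) measurable

lemma bid_amount_nonneg: "b \<in> space bid_item \<Longrightarrow> 0 \<le> bid_amount b"
  by (auto simp: space_bid_item bid_amount_def)

lemma bid_rank_le_bid_amount: "b \<in> space bid_item \<Longrightarrow> bid_rank b \<le> bid_amount b"
  by (auto simp: space_bid_item bid_amount_def bid_rank_def)

lemma sap_pay_eq_bid_amount: "sap_pay j bb k = bid_amount (bb k)"
  by (simp add: sap_pay_def bid_amount_def)

lemma highest_eq_bid_rank:
  assumes "\<And>k. k < n \<Longrightarrow> bb k \<in> space bid_item"
  shows "highest n bb =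
    {k\<in>{..<n}. 0 \<le> bid_rank (bb k) \<and> (\<forall>k'<n. bid_rank (bb k') \<le> bid_rank (bb k))}"
proof (intro set_eqI iffI)
  fix k assume "k \<in> highest n bb"
  then obtain x where k: "k < n" "bb k = Some x" and top: "\<forall>k' y. k' < n \<longrightarrow> bb k' = Some y \<longrightarrow> y \<le> x"
    by (auto simp: highest_def)
  have "0 \<le> x" using assms[OF k(1)] k(2) by (auto simp: space_bid_item)
  moreover have "bid_rank (bb k') \<le> x" if "k' < n" for k'
    using top that \<open>0 \<le> x\<close> by (cases "bb k'") (auto simp: bid_rank_def)
  ultimately show "k \<in> {k\<in>{..<n}. 0 \<le> bid_rank (bb k) \<and> (\<forall>k'<n. bid_rank (bb k') \<le> bid_rank (bb k))}"
    using k by (simp add: bid_rank_def)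
next
  fix k assume "k \<in> {k\<in>{..<n}. 0 \<le> bid_rank (bb k) \<and> (\<forall>k'<n. bid_rank (bb k') \<le> bid_rank (bb k))}"
  then show "k \<in> highest n bb"
    by (cases "bb k") (fastforce simp: highest_def bid_rank_def)+
qed

lemma measurable_finite_subset_valued:
  assumes "finite S" and P: "\<And>j. j \<in> S \<Longrightarrow> Measurable.pred M (P j)"
    and f: "\<And>A. f A \<in> space N"
  shows "(\<lambda>x. f {j\<in>S. P j x}) \<in> M \<rightarrow>\<^sub>M N"
proof (rule measurable_compose_countable'[where I="Pow S"])
  show "countable (Pow S)" using \<open>finite S\<close> by (simp add: countable_finite)
  show "(\<lambda>x. {j\<in>S. P j x}) \<in> M \<rightarrow>\<^sub>M count_space (Pow S)"
  proof (subst measurable_count_space_eq_countable[OF \<open>countable (Pow S)\<close>], safe)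
    fix A assume "A \<subseteq> S"
    have "(\<lambda>x. {j\<in>S. P j x}) -` {A} \<inter> space M = {x\<in>space M. \<forall>j\<in>S. P j x \<longleftrightarrow> j \<in> A}"
      using \<open>A \<subseteq> S\<close> by auto
    also have "\<dots> \<in> sets M" using \<open>finite S\<close> P by measurable
    finally show "(\<lambda>x. {j\<in>S. P j x}) -` {A} \<inter> space M \<in> sets M" .
  qed
qed (use f in simp)

lemma (in prob_space) exists_ge_integral:
  fixes f :: "'a \<Rightarrow> real"
  assumes "integrable M f"
  shows "\<exists>x\<in>space M. integral\<^sup>L M f \<le> f x"
proof (rule ccontr)
  assume "\<not> ?thesis"
  then have "AE x in M. f x < integral\<^sup>L M f" by (intro AE_I2) (auto simp: not_le)
  from expectation_less[OF assms this] show False by simp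
qed

lemma nn_integral_PiM_component:
  assumes "\<And>k. k \<in> I \<Longrightarrow> prob_space (M k)" "k \<in> I" "f \<in> borel_measurable (M k)"
  shows "(\<integral>\<^sup>+w. f (w k) \<partial>PiM I M) = (\<integral>\<^sup>+x. f x \<partial>M k)"
proof -
  have "(\<integral>\<^sup>+x. f x \<partial>distr (PiM I M) (M k) (\<lambda>w. w k)) = (\<integral>\<^sup>+w. f (w k) \<partial>PiM I M)"
    using assms by (intro nn_integral_distr) (auto simp: distr_PiM_component)
  then show ?thesis using assms by (simp add: distr_PiM_component)
qed

lemma (in prob_space) subadditive_symmetrization:
  fixes V :: "'b set \<Rightarrow> real" and h :: "'b \<Rightarrow> 'a \<Rightarrow> real"
  assumes S: "finite S" and h: "\<And>j. j \<in> S \<Longrightarrow> h j \<in> borel_measurable M"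
    and nonneg: "\<And>A. A \<subseteq> S \<Longrightarrow> 0 \<le> V A"
    and mono: "\<And>A B. A \<subseteq> B \<Longrightarrow> B \<subseteq> S \<Longrightarrow> V A \<le> V B"
    and subadd: "\<And>A B. A \<subseteq> S \<Longrightarrow> B \<subseteq> S \<Longrightarrow> V (A \<union> B) \<le> V A + V B"
  shows "integrable M (\<lambda>w'. \<integral>w. V {j\<in>S. h j w \<le> h j w'} \<partial>M)"
    and "V S / 2 \<le> (\<integral>w'. \<integral>w. V {j\<in>S. h j w \<le> h j w'} \<partial>M \<partial>M)"
proof -
  interpret pair_prob_space M M ..
  define g where "g p = V {j\<in>S. h j (snd p) \<le> h j (fst p)}" for p
  have g_meas: "g \<in> borel_measurable (M \<Otimes>\<^sub>M M)"
    and g_swap_meas: "(\<lambda>(x, y). g (y, x)) \<in> borel_measurable (M \<Otimes>\<^sub>M M)"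
    unfolding g_def split_beta' using S h by (auto intro!: measurable_finite_subset_valued)
  have g_bounds: "0 \<le> g p \<and> g p \<le> V S" for p
    unfolding g_def using nonneg mono by auto
  have g_int: "integrable (M \<Otimes>\<^sub>M M) g"
    using g_bounds by (intro P.integrable_const_bound[OF _ g_meas, of "V S"]) auto
  have g_swap_int: "integrable (M \<Otimes>\<^sub>M M) (\<lambda>(x, y). g (y, x))"
    using g_bounds by (intro P.integrable_const_bound[OF _ g_swap_meas, of "V S"]) auto
  show "integrable M (\<lambda>w'. \<integral>w. V {j\<in>S. h j w \<le> h j w'} \<partial>M)"
    using integrable_fst'[OF g_int] by (simp add: g_def)
  have "V S \<le> (\<integral>p. g p + (\<lambda>(x, y). g (y, x)) p \<partial>(M \<Otimes>\<^sub>M M))"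
  proof (rule P.integral_ge_const)
    show "AE p in M \<Otimes>\<^sub>M M. V S \<le> g p + (\<lambda>(x, y). g (y, x)) p"
    proof (intro AE_I2)
      fix p :: "'a \<times> 'a"
      have "{j\<in>S. h j (snd p) \<le> h j (fst p)} \<union> {j\<in>S. h j (fst p) \<le> h j (snd p)} = S" by auto
      then show "V S \<le> g p + (\<lambda>(x, y). g (y, x)) p"
        unfolding g_def split_beta fst_conv snd_conv
        by (metis (no_types, lifting) subadd mem_Collect_eq subsetI)
    qed
  qed (use g_int g_swap_int in auto)
  also have "\<dots> = 2 * integral\<^sup>L (M \<Otimes>\<^sub>M M) g"
    using integral_product_swap[OF g_meas] g_int g_swap_int by simp
  also have "integral\<^sup>L (M \<Otimes>\<^sub>M M) g = (\<integral>w'. \<integral>w. V {j\<in>S. h j w \<le> h j w'} \<partial>M \<partial>M)"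
    using integral_fst'[OF g_int] by (simp add: g_def)
  finally show "V S / 2 \<le> (\<integral>w'. \<integral>w. V {j\<in>S. h j w \<le> h j w'} \<partial>M \<partial>M)" by simp
qed

lemma highest_eq_singleton:
  assumes "i < n" "bb i = Some x" "\<And>k y. k < n \<Longrightarrow> k \<noteq> i \<Longrightarrow> bb k = Some y \<Longrightarrow> y < x"
  shows "highest n bb = {i}"
  using assms by (fastforce simp: highest_def)

lemma prob_space_joint:
  assumes "prob_space Di" "si \<in> Di \<rightarrow>\<^sub>M prob_algebra (bid_space m)"
  shows "prob_space (joint m Di si)"
  unfolding joint_def
  by (rule prob_space_bind'[where N="Di \<Otimes>\<^sub>M bid_space m"]) (use assms in \<open>auto simp: space_prob_algebra\<close>)

lemma sets_joint:
  assumes "prob_space Di" "si \<in> Di \<rightarrow>\<^sub>M prob_algebra (bid_space m)"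
  shows "sets (joint m Di si) = sets (Di \<Otimes>\<^sub>M bid_space m)"
  unfolding joint_def
  by (rule sets_bind'[where N="Di \<Otimes>\<^sub>M bid_space m"]) (use assms in \<open>auto simp: space_prob_algebra\<close>)

locale sap_bidder =
  fixes n m :: nat and D :: "nat \<Rightarrow> 't measure" and s :: "nat \<Rightarrow> 't \<Rightarrow> bidvec measure"
    and tb :: "nat \<Rightarrow> nat set \<Rightarrow> nat" and i :: nat
  assumes valid: "valid_setting n m D s"
    and tie_break: "\<And>j H. H \<noteq> {} \<Longrightarrow> tb j H \<in> H"
    and bidder: "i < n"
begin

abbreviation "rivals \<equiv> {..<n} - {i}"
abbreviation "P \<equiv> others n m D s i"
abbreviation "J k \<equiv> joint m (D k) (s k)"
abbreviation "wins q w \<equiv> won (sap_alloc tb n) n m i q w"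

lemma prob_space_J: "k < n \<Longrightarrow> prob_space (J k)"
  using valid prob_space_joint unfolding valid_setting_def by blast

lemma sets_J: "k < n \<Longrightarrow> sets (J k) = sets (D k \<Otimes>\<^sub>M bid_space m)"
  using valid sets_joint unfolding valid_setting_def by blast

lemma prob_space_P: "prob_space P"
  unfolding others_def by (rule prob_space_PiM) (use prob_space_J in auto)

lemma measurable_bid_J: "k < n \<Longrightarrow> j < m \<Longrightarrow> (\<lambda>x. snd x j) \<in> J k \<rightarrow>\<^sub>M bid_item"
  unfolding measurable_cong_sets[OF sets_J refl] bid_space_def by measurable

lemma measurable_rival_bid: "k \<in> rivals \<Longrightarrow> j < m \<Longrightarrow> (\<lambda>w. snd (w k) j) \<in> P \<rightarrow>\<^sub>M bid_item"
proof -
  assume "k \<in> rivals" "j < m"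
  then have "(\<lambda>w. w k) \<in> P \<rightarrow>\<^sub>M J k"
    unfolding others_def by (intro measurable_component_singleton)
  with measurable_bid_J show ?thesis
    using \<open>k \<in> rivals\<close> \<open>j < m\<close> by (auto intro: measurable_compose)
qed

lemma rival_bid_space: "w \<in> space P \<Longrightarrow> k \<in> rivals \<Longrightarrow> j < m \<Longrightarrow> snd (w k) j \<in> space bid_item"
  by (rule measurable_space[OF measurable_rival_bid])

text \<open>The rivals' total bid dominates the highest rival bid, and unlike the maximum its
  expectation is directly bounded by the revenue.\<close>

definition rival_total :: "nat \<Rightarrow> (nat \<Rightarrow> 't \<times> bidvec) \<Rightarrow> real" where
  "rival_total j w = (\<Sum>k\<in>rivals. bid_amount (snd (w k) j))"

lemma measurable_rival_total: "j < m \<Longrightarrow> rival_total j \<in> borel_measurable P"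
  unfolding rival_total_def[abs_def]
  by (intro borel_measurable_sum measurable_compose[OF measurable_rival_bid measurable_bid_amount]) auto

lemma rival_total_nonneg: "w \<in> space P \<Longrightarrow> j < m \<Longrightarrow> 0 \<le> rival_total j w"
  unfolding rival_total_def by (intro sum_nonneg bid_amount_nonneg rival_bid_space) auto

lemma rival_bid_le_rival_total:
  assumes "w \<in> space P" "j < m" "k \<in> rivals"
  shows "bid_rank (snd (w k) j) \<le> rival_total j w"
proof -
  have "bid_rank (snd (w k) j) \<le> bid_amount (snd (w k) j)"
    using assms by (intro bid_rank_le_bid_amount rival_bid_space)
  also have "\<dots> \<le> rival_total j w"
    unfolding rival_total_def using assms
    by (intro member_le_sum bid_amount_nonneg rival_bid_space) auto
  finally show ?thesis .
qed

lemma item_bids_space: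
  assumes "q \<in> space (bid_space m)" "w \<in> space P" "j < m" "k < n"
  shows "item_bids n i q w j k \<in> space bid_item"
  using assms rival_bid_space[of w k j] by (auto simp: item_bids_def space_bid_space)

lemma measurable_item_bid_rank:
  assumes "j < m"
  shows "(\<lambda>(q, w). bid_rank (item_bids n i q w j k)) \<in> borel_measurable (bid_space m \<Otimes>\<^sub>M P)"
proof (cases "k \<in> rivals")
  case True
  have "(\<lambda>x. snd (snd x k) j) \<in> bid_space m \<Otimes>\<^sub>M P \<rightarrow>\<^sub>M bid_item"
    using measurable_compose[OF measurable_snd measurable_rival_bid[OF True assms]] .
  then show ?thesis using True by (simp add: item_bids_def split_beta')
next
  case False
  have "(\<lambda>x. fst x j) \<in> bid_space m \<Otimes>\<^sub>M P \<rightarrow>\<^sub>M bid_item"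
    unfolding bid_space_def by measurable (simp add: assms)
  then show ?thesis using False by (cases "k = i") (auto simp: item_bids_def split_beta')
qed

lemma pred_wins:
  assumes "j < m"
  shows "Measurable.pred (bid_space m \<Otimes>\<^sub>M P) (\<lambda>(q, w). j \<in> wins q w)"
proof -
  let ?rank = "\<lambda>x k. bid_rank (item_bids n i (fst x) (snd x) j k)"
  have "j \<in> wins (fst x) (snd x) \<longleftrightarrow> (\<lambda>H. H \<noteq> {} \<and> tb j H = i)
      {k\<in>{..<n}. 0 \<le> ?rank x k \<and> (\<forall>k'<n. ?rank x k' \<le> ?rank x k)}"
    if "x \<in> space (bid_space m \<Otimes>\<^sub>M P)" for x
    using that assms item_bids_space
    by (auto simp: won_def sap_alloc_def highest_eq_bid_rank space_pair_measure)
  moreover have "Measurable.pred (bid_space m \<Otimes>\<^sub>M P) (\<lambda>x. (\<lambda>H. H \<noteq> {} \<and> tb j H = i)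
      {k\<in>{..<n}. 0 \<le> ?rank x k \<and> (\<forall>k'<n. ?rank x k' \<le> ?rank x k)})"
    using measurable_item_bid_rank[OF assms] by (intro measurable_finite_subset_valued) (auto simp: split_beta')
  ultimately show ?thesis by (subst measurable_cong) (auto simp: split_beta')
qed

lemma measurable_value_wins:
  assumes "S \<subseteq> {..<m}"
  shows "(\<lambda>(q, w). V (wins q w \<inter> S) :: real) \<in> borel_measurable (bid_space m \<Otimes>\<^sub>M P)"
proof -
  have "(\<lambda>(q, w). V (wins q w \<inter> S)) = (\<lambda>(q, w). V {j\<in>S. j \<in> wins q w})"
    by (auto intro!: arg_cong[where f=V])
  also have "\<dots> \<in> borel_measurable (bid_space m \<Otimes>\<^sub>M P)"
    unfolding split_beta' using assms pred_wins finite_subset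
    by (intro measurable_finite_subset_valued) (auto simp: split_beta')
  finally show ?thesis .
qed

lemma exp_util_return:
  assumes q: "q \<in> space (bid_space m)" and S: "S \<subseteq> {..<m}"
  shows "exp_util (sap_alloc tb n) sap_pay n m D s v i t (return (bid_space m) q) S =
         ereal (\<integral>w. v i t (wins q w \<inter> S) \<partial>P) - ereal (\<Sum>j\<in>S. bid_amount (q j))"
proof -
  interpret P: prob_space P by (rule prob_space_P)
  have value_meas: "(\<lambda>q. \<integral>w. v i t (wins q w \<inter> S) \<partial>P) \<in> borel_measurable (bid_space m)"
    using P.borel_measurable_lebesgue_integral[OF measurable_value_wins[OF S]] by (simp add: split_beta')
  have pay_meas: "(\<lambda>q. ennreal (\<Sum>j\<in>S. bid_amount (q j))) \<in> borel_measurable (bid_space m)"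
    unfolding bid_space_def by measurable (use S in auto)
  have "0 \<le> (\<Sum>j\<in>S. bid_amount (q j))"
    using q S by (intro sum_nonneg bid_amount_nonneg) (auto simp: space_bid_space)
  then show ?thesis
    unfolding exp_util_def
    by (simp add: item_bids_def sap_pay_eq_bid_amount P.emeasure_space_1 integral_return[OF q value_meas]
                  nn_integral_return[OF q pay_meas])
qed

definition overbid :: "real \<Rightarrow> (nat \<Rightarrow> 't \<times> bidvec) \<Rightarrow> bidvec" where
  "overbid e w' = (\<lambda>j\<in>{..<m}. Some (rival_total j w' + e))"

lemma overbid_space: "0 \<le> e \<Longrightarrow> w' \<in> space P \<Longrightarrow> overbid e w' \<in> space (bid_space m)"
  using rival_total_nonneg by (auto simp: overbid_def space_bid_space space_bid_item)

lemma bid_amount_overbid: "j < m \<Longrightarrow> bid_amount (overbid e w' j) = rival_total j w' + e"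
  by (simp add: overbid_def bid_amount_def)

lemma overbid_wins:
  assumes e: "0 < e" and w: "w \<in> space P" and j: "j < m"
    and le: "rival_total j w \<le> rival_total j w'"
  shows "j \<in> wins (overbid e w') w"
proof -
  have "highest n (item_bids n i (overbid e w') w j) = {i}"
  proof (rule highest_eq_singleton[OF bidder])
    show "item_bids n i (overbid e w') w j i = Some (rival_total j w' + e)"
      using j by (simp add: item_bids_def overbid_def)
    fix k y assume k: "k < n" "k \<noteq> i" and "item_bids n i (overbid e w') w j k = Some y"
    then have "bid_rank (snd (w k) j) = y" by (simp add: item_bids_def bid_rank_def)
    with rival_bid_le_rival_total[OF w j, of k] k e le show "y < rival_total j w' + e" by simp
  qed
  then show ?thesis using tie_break[of "{i}" j] j by (simp add: won_def sap_alloc_def)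
qed

lemma expected_value_overbid_ge:
  fixes V :: "nat set \<Rightarrow> real"
  assumes S: "S \<subseteq> {..<m}" and e: "0 < e" and w': "w' \<in> space P"
    and nonneg: "\<And>A. A \<subseteq> {..<m} \<Longrightarrow> 0 \<le> V A"
    and mono: "\<And>A B. A \<subseteq> B \<Longrightarrow> B \<subseteq> {..<m} \<Longrightarrow> V A \<le> V B"
  shows "(\<integral>w. V {j\<in>S. rival_total j w \<le> rival_total j w'} \<partial>P)
       \<le> (\<integral>w. V (wins (overbid e w') w \<inter> S) \<partial>P)"
proof (rule integral_mono)
  interpret P: prob_space P by (rule prob_space_P)
  have bounds: "A \<subseteq> S \<Longrightarrow> norm (V A) \<le> V S" for A
    using nonneg mono S by (metis order.trans real_norm_def abs_of_nonneg)
  have "(\<lambda>w. V {j\<in>S. rival_total j w \<le> rival_total j w'}) \<in> borel_measurable P"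
    using S finite_subset measurable_rival_total by (intro measurable_finite_subset_valued) auto
  then show "integrable P (\<lambda>w. V {j\<in>S. rival_total j w \<le> rival_total j w'})"
    using bounds by (intro P.integrable_const_bound[where B="V S"]) auto
  have "(\<lambda>w. (overbid e w', w)) \<in> P \<rightarrow>\<^sub>M bid_space m \<Otimes>\<^sub>M P"
    using overbid_space[of e w'] e w' by (intro measurable_Pair measurable_const) auto
  from measurable_compose[OF this measurable_value_wins[OF S]]
  have "(\<lambda>w. V (wins (overbid e w') w \<inter> S)) \<in> borel_measurable P" by simp
  then show "integrable P (\<lambda>w. V (wins (overbid e w') w \<inter> S))"
    using bounds by (intro P.integrable_const_bound[where B="V S"]) auto
  fix w assume "w \<in> space P"
  then have "{j\<in>S. rival_total j w \<le> rival_total j w'} \<subseteq> wins (overbid e w') w \<inter> S"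
    using overbid_wins e S by auto
  then show "V {j\<in>S. rival_total j w \<le> rival_total j w'} \<le> V (wins (overbid e w') w \<inter> S)"
    using S by (intro mono) auto
qed

lemma mu_ge_overbid:
  assumes S: "S \<subseteq> {..<m}" and e: "0 < e" and w': "w' \<in> space P"
    and nonneg: "\<And>A. A \<subseteq> {..<m} \<Longrightarrow> 0 \<le> v i t A"
    and mono: "\<And>A B. A \<subseteq> B \<Longrightarrow> B \<subseteq> {..<m} \<Longrightarrow> v i t A \<le> v i t B"
  shows "ereal ((\<integral>w. v i t {j\<in>S. rival_total j w \<le> rival_total j w'} \<partial>P)
                 - (\<Sum>j\<in>S. rival_total j w' + e))
         \<le> mu (sap_alloc tb n) sap_pay n m D s v i t S"
proof -
  have q: "overbid e w' \<in> space (bid_space m)" using overbid_space e w' by simp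
  have "ereal ((\<integral>w. v i t {j\<in>S. rival_total j w \<le> rival_total j w'} \<partial>P)
                 - (\<Sum>j\<in>S. rival_total j w' + e))
      \<le> exp_util (sap_alloc tb n) sap_pay n m D s v i t (return (bid_space m) (overbid e w')) S"
    unfolding exp_util_return[OF q S]
    using expected_value_overbid_ge[OF S e w', of "v i t"] nonneg mono S bid_amount_overbid
    by (simp add: subset_iff)
  also have "\<dots> \<le> mu (sap_alloc tb n) sap_pay n m D s v i t S"
    unfolding mu_def by (rule SUP_upper[OF q])
  finally show ?thesis .
qed

definition expected_bid :: "nat \<Rightarrow> nat \<Rightarrow> ennreal" where
  "expected_bid k j = (\<integral>\<^sup>+x. ennreal (bid_amount (snd x j)) \<partial>J k)"

lemma measurable_bid_amount_J:
  "k < n \<Longrightarrow> j < m \<Longrightarrow> (\<lambda>x. ennreal (bid_amount (snd x j))) \<in> borel_measurable (J k)"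
  by (intro measurable_compose[OF _ measurable_ennreal] measurable_compose[OF measurable_bid_J measurable_bid_amount])

lemma nn_integral_rival_total:
  assumes j: "j < m"
  shows "(\<integral>\<^sup>+w. ennreal (rival_total j w) \<partial>P) = (\<Sum>k\<in>rivals. expected_bid k j)"
proof -
  have "(\<integral>\<^sup>+w. ennreal (rival_total j w) \<partial>P) = (\<integral>\<^sup>+w. (\<Sum>k\<in>rivals. ennreal (bid_amount (snd (w k) j))) \<partial>P)"
    unfolding rival_total_def using j
    by (intro nn_integral_cong sum_ennreal[symmetric] bid_amount_nonneg rival_bid_space) auto
  also have "\<dots> = (\<Sum>k\<in>rivals. \<integral>\<^sup>+w. ennreal (bid_amount (snd (w k) j)) \<partial>P)"
    using j by (intro nn_integral_sum measurable_compose[OF _ measurable_ennreal]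
                      measurable_compose[OF measurable_rival_bid measurable_bid_amount]) auto
  also have "\<dots> = (\<Sum>k\<in>rivals. expected_bid k j)"
    unfolding expected_bid_def others_def using j prob_space_J measurable_bid_amount_J
    by (intro sum.cong refl nn_integral_PiM_component) auto
  finally show ?thesis .
qed

lemma revenue_eq_expected_bids:
  assumes S: "S \<subseteq> {..<m}"
  shows "revenue sap_pay n m D s S = (\<Sum>k<n. \<Sum>j\<in>S. expected_bid k j)"
  unfolding revenue_def expected_bid_def profile_def sap_pay_eq_bid_amount full_bids_def
proof (intro sum.cong refl)
  fix k j assume k: "k \<in> {..<n}" and j: "j \<in> S"
  have "(\<integral>\<^sup>+w. ennreal (bid_amount (snd (w k) j)) \<partial>PiM {..<n} J)
      = (\<integral>\<^sup>+x. ennreal (bid_amount (snd x j)) \<partial>J k)"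
    by (rule nn_integral_PiM_component[where f="\<lambda>x. ennreal (bid_amount (snd x j))"])
       (use k j S prob_space_J measurable_bid_amount_J in auto)
  then show "(\<integral>\<^sup>+w. ennreal (bid_amount (if k < n then snd (w k) j else None)) \<partial>PiM {..<n} J)
      = (\<integral>\<^sup>+x. ennreal (bid_amount (snd x j)) \<partial>J k)"
    using k by simp
qed

lemma rival_totals_le_revenue:
  assumes S: "S \<subseteq> {..<m}"
  shows "(\<Sum>j\<in>S. \<integral>\<^sup>+w. ennreal (rival_total j w) \<partial>P) \<le> revenue sap_pay n m D s S"
proof -
  have "(\<Sum>j\<in>S. \<integral>\<^sup>+w. ennreal (rival_total j w) \<partial>P) = (\<Sum>j\<in>S. \<Sum>k\<in>rivals. expected_bid k j)"
    using S nn_integral_rival_total by (intro sum.cong) auto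
  also have "\<dots> \<le> (\<Sum>j\<in>S. \<Sum>k<n. expected_bid k j)"
    by (intro sum_mono sum_mono2) auto
  also have "\<dots> = revenue sap_pay n m D s S"
    using revenue_eq_expected_bids[OF S] sum.swap by metis
  finally show ?thesis .
qed

lemma integrable_rival_total:
  assumes S: "S \<subseteq> {..<m}" and R: "revenue sap_pay n m D s S \<noteq> \<top>" and j: "j \<in> S"
  shows "integrable P (rival_total j)"
proof (rule integrableI_nonneg)
  show "rival_total j \<in> borel_measurable P" using measurable_rival_total j S by auto
  show "AE w in P. 0 \<le> rival_total j w" using rival_total_nonneg j S by (intro AE_I2) auto
  have "(\<integral>\<^sup>+w. ennreal (rival_total j w) \<partial>P) \<le> (\<Sum>j\<in>S. \<integral>\<^sup>+w. ennreal (rival_total j w) \<partial>P)"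
    using j S finite_subset by (intro member_le_sum) auto
  also have "\<dots> \<le> revenue sap_pay n m D s S" by (rule rival_totals_le_revenue[OF S])
  finally show "(\<integral>\<^sup>+w. ennreal (rival_total j w) \<partial>P) < \<infinity>" using R by (simp add: top.not_eq_extremum le_less_trans)
qed

lemma integral_rival_totals_le_revenue:
  assumes S: "S \<subseteq> {..<m}" and R: "revenue sap_pay n m D s S \<noteq> \<top>"
  shows "(\<Sum>j\<in>S. \<integral>w. rival_total j w \<partial>P) \<le> enn2real (revenue sap_pay n m D s S)"
proof -
  have "ennreal (\<Sum>j\<in>S. \<integral>w. rival_total j w \<partial>P) = (\<Sum>j\<in>S. \<integral>\<^sup>+w. ennreal (rival_total j w) \<partial>P)"
    using integrable_rival_total[OF S R] rival_total_nonneg S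
    by (subst sum_ennreal[symmetric])
       (auto intro!: sum.cong Bochner_Integration.integral_nonneg nn_integral_eq_integral[symmetric] AE_I2)
  also have "\<dots> \<le> revenue sap_pay n m D s S" by (rule rival_totals_le_revenue[OF S])
  finally show ?thesis using R by (cases "revenue sap_pay n m D s S" rule: ennreal_cases) auto
qed

lemma mu_ge_half_value_minus_revenue:
  assumes S: "S \<subseteq> {..<m}" and R: "revenue sap_pay n m D s S \<noteq> \<top>" and e: "0 < e"
    and nonneg: "\<And>A. A \<subseteq> {..<m} \<Longrightarrow> 0 \<le> v i t A"
    and mono: "\<And>A B. A \<subseteq> B \<Longrightarrow> B \<subseteq> {..<m} \<Longrightarrow> v i t A \<le> v i t B"
    and subadd: "\<And>A B. A \<subseteq> {..<m} \<Longrightarrow> B \<subseteq> {..<m} \<Longrightarrow> v i t (A \<union> B) \<le> v i t A + v i t B"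
  shows "ereal (v i t S / 2 - enn2real (revenue sap_pay n m D s S) - real (card S) * e)
         \<le> mu (sap_alloc tb n) sap_pay n m D s v i t S"
proof -
  interpret P: prob_space P by (rule prob_space_P)
  define G where "G w' = (\<integral>w. v i t {j\<in>S. rival_total j w \<le> rival_total j w'} \<partial>P)" for w'
  define cost where "cost w' = (\<Sum>j\<in>S. rival_total j w' + e)" for w'
  have finite: "finite S" using S finite_subset by blast
  have G_int: "integrable P G" and G_ge: "v i t S / 2 \<le> integral\<^sup>L P G"
    unfolding G_def using S finite nonneg mono subadd measurable_rival_total
    by (intro P.subadditive_symmetrization; auto)+
  have cost_int: "integrable P cost"
    unfolding cost_def using integrable_rival_total[OF S R] by auto
  have "integral\<^sup>L P cost = (\<Sum>j\<in>S. \<integral>w. rival_total j w \<partial>P) + real (card S) * e"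
    unfolding cost_def using integrable_rival_total[OF S R]
    by (simp add: Bochner_Integration.integral_sum sum.distrib P.prob_space)
  then have "v i t S / 2 - enn2real (revenue sap_pay n m D s S) - real (card S) * e
      \<le> (\<integral>w'. G w' - cost w' \<partial>P)"
    using G_ge integral_rival_totals_le_revenue[OF S R] G_int cost_int by simp
  moreover obtain w' where w': "w' \<in> space P" and "(\<integral>w'. G w' - cost w' \<partial>P) \<le> G w' - cost w'"
    using P.exists_ge_integral[of "\<lambda>w'. G w' - cost w'"] G_int cost_int by auto
  ultimately have "ereal (v i t S / 2 - enn2real (revenue sap_pay n m D s S) - real (card S) * e)
      \<le> ereal (G w' - cost w')" by simp
  also have "\<dots> \<le> mu (sap_alloc tb n) sap_pay n m D s v i t S"
    unfolding G_def cost_def by (rule mu_ge_overbid) (use S e w' nonneg mono in auto)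
  finally show ?thesis .
qed

lemma half_value_le_mu_plus_revenue:
  assumes S: "S \<subseteq> {..<m}"
    and nonneg: "\<And>A. A \<subseteq> {..<m} \<Longrightarrow> 0 \<le> v i t A"
    and mono: "\<And>A B. A \<subseteq> B \<Longrightarrow> B \<subseteq> {..<m} \<Longrightarrow> v i t A \<le> v i t B"
    and subadd: "\<And>A B. A \<subseteq> {..<m} \<Longrightarrow> B \<subseteq> {..<m} \<Longrightarrow> v i t (A \<union> B) \<le> v i t A + v i t B"
  shows "ereal (v i t S / 2)
         \<le> mu (sap_alloc tb n) sap_pay n m D s v i t S + enn2ereal (revenue sap_pay n m D s S)"
proof (cases "revenue sap_pay n m D s S = \<top>")
  case True
  obtain w' where w': "w' \<in> space P" using prob_space.not_empty[OF prob_space_P] by blast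
  have "ereal ((\<integral>w. v i t {j\<in>S. rival_total j w \<le> rival_total j w'} \<partial>P)
                 - (\<Sum>j\<in>S. rival_total j w' + 1))
         \<le> mu (sap_alloc tb n) sap_pay n m D s v i t S"
    by (rule mu_ge_overbid[OF S zero_less_one w']) (use nonneg mono in auto)
  then have "mu (sap_alloc tb n) sap_pay n m D s v i t S \<noteq> -\<infinity>" by auto
  then show ?thesis using True by (cases "mu (sap_alloc tb n) sap_pay n m D s v i t S") auto
next
  case False
  let ?r = "enn2real (revenue sap_pay n m D s S)"
  have "ereal (v i t S / 2) \<le> mu (sap_alloc tb n) sap_pay n m D s v i t S + ereal ?r"
  proof (rule ereal_le_epsilon2)
    fix \<delta> :: real assume "0 < \<delta>"
    define e where "e = \<delta> / (real (card S) + 1)"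
    have "0 < e" "real (card S) * e \<le> \<delta>"
      using \<open>0 < \<delta>\<close> by (auto simp: e_def field_simps)
    have "ereal (v i t S / 2 - ?r - real (card S) * e) \<le> mu (sap_alloc tb n) sap_pay n m D s v i t S"
      by (rule mu_ge_half_value_minus_revenue[where v=v and t=t, OF S False \<open>0 < e\<close>])
         (use nonneg mono subadd in auto)
    moreover have "ereal (v i t S / 2 - ?r - \<delta>) \<le> ereal (v i t S / 2 - ?r - real (card S) * e)"
      using \<open>real (card S) * e \<le> \<delta>\<close> by simp
    ultimately have lower: "ereal (v i t S / 2 - ?r - \<delta>) \<le> mu (sap_alloc tb n) sap_pay n m D s v i t S"
      by (rule order_trans[rotated])
    have "ereal (v i t S / 2) = ereal (v i t S / 2 - ?r - \<delta>) + ereal ?r + ereal \<delta>" by simp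
    also have "\<dots> \<le> mu (sap_alloc tb n) sap_pay n m D s v i t S + ereal ?r + ereal \<delta>"
      using lower by (intro add_right_mono)
    finally show "ereal (v i t S / 2) \<le> mu (sap_alloc tb n) sap_pay n m D s v i t S + ereal ?r + ereal \<delta>" .
  qed
  then show ?thesis using False by (cases "revenue sap_pay n m D s S" rule: ennreal_cases) auto
qed

end

theorem lemma2:
  fixes n m :: nat
    and D :: "nat \<Rightarrow> 't measure"
    and v :: "nat \<Rightarrow> 't \<Rightarrow> nat set \<Rightarrow> real"
    and s :: "nat \<Rightarrow> 't \<Rightarrow> bidvec measure"
    and tb :: "nat \<Rightarrow> nat set \<Rightarrow> nat"
  assumes tie_break: "\<And>j H. H \<noteq> {} \<Longrightarrow> tb j H \<in> H"
    and nonneg: "\<And>i t S. i < n \<Longrightarrow> t \<in> space (D i) \<Longrightarrow> S \<subseteq> {..<m} \<Longrightarrow> v i t S \<ge> 0"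
    and monotone: "\<And>i t S T. i < n \<Longrightarrow> t \<in> space (D i) \<Longrightarrow> S \<subseteq> T \<Longrightarrow> T \<subseteq> {..<m}
                     \<Longrightarrow> v i t S \<le> v i t T"
    and subadditive: "\<And>i t S T. i < n \<Longrightarrow> t \<in> space (D i) \<Longrightarrow> S \<subseteq> {..<m} \<Longrightarrow> T \<subseteq> {..<m}
                     \<Longrightarrow> v i t (S \<union> T) \<le> v i t S + v i t T"
    and equilibrium: "BNE (sap_alloc tb n) sap_pay n m D s v"
  shows "c_efficient (1/2) (sap_alloc tb n) sap_pay n m D s v"
proof -
  have valid: "valid_setting n m D s" using equilibrium by (simp add: BNE_def)
  have payments: "\<forall>j<m. \<forall>bb k. (\<forall>k' x. bb k' = Some x \<longrightarrow> x \<ge> 0) \<longrightarrow>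
      (sap_pay j bb k \<ge> 0 \<and> (bb k = None \<longrightarrow> sap_pay j bb k = 0))"
    by (auto simp: sap_pay_def split: option.split)
  have winner: "\<forall>j<m. \<forall>bb. highest n bb \<noteq> {} \<longrightarrow> (\<exists>k\<in>highest n bb. sap_alloc tb n j bb = Some k)"
    using tie_break by (auto simp: sap_alloc_def)
  have "ereal (1/2 * v i t S)
      \<le> mu (sap_alloc tb n) sap_pay n m D s v i t S + enn2ereal (revenue sap_pay n m D s S)"
    if i: "i < n" and t: "t \<in> space (D i)" and S: "S \<subseteq> {..<m}" for i t S
  proof -
    interpret sap_bidder n m D s tb i using valid tie_break i by unfold_locales
    show ?thesis
      using half_value_le_mu_plus_revenue[where v=v and t=t, OF S] nonneg monotone subadditive i t
      by simp
  qed
  then show ?thesis unfolding c_efficient_def using payments winner by blast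
qed

end
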